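(* Let $N\ge 2$ and $M>2$ be integers and consider the indirect control system described in the context, with real Lie algebra $\mathcal{L}$ generated by $iH_0$, $i(1_S\otimes\sigma_x^j)$ and $i(1_S\otimes\sigma_y^j)$, $j=1,\dots,M$. If Condition 1 and Condition 2 hold, then $i(1_S\otimes\sigma_{[\alpha]})\in\mathcal{L}$ for every $[\alpha]\in\{x,y,z,0\}^M$ with $[\alpha]\neq(0,\dots,0)$.
   Context: The controlled system is $\mathbb{C}^N$ with orthonormal basis $|1\rangle,\dots,|N\rangle$; $e_{jk}=|j\rangle\langle k|$. $H_S=\sum_{j=1}^N E_j e_{jj}$ with real $E_j$, $\sum_j E_j=0$. For $1\le j<k\le N$: $x_{jk}=e_{jk}+e_{kj}$, $y_{jk}=i(e_{jk}-e_{kj})$, $h_j=e_{jj}-e_{j+1,j+1}$; $x_j=x_{j,j+1}$, $y_j=y_{j,j+1}$; $s_j^{(1)}=x_j$, $s_j^{(2)}=y_j$. The accessor is $(\mathbb{C}^2)^{\otimes M}$; $\sigma_\alpha^j$ is the Pauli matrix $\sigma_\alpha$ ($\alpha=x,y,z$) on the $j$-th qubit, $\sigma_0=1$, and $\sigma_{[\alpha]}=\prod_{j=1}^M\sigma^j_{\alpha_j}$ for $[\alpha]\in\{x,y,z,0\}^M$. $1_S,1_A$ denote identities. $H_A=\sum_{j=1}^M\hbar\omega_j\sigma_z^j+\sum_{j=1}^{M-1}c_j\sigma_x^j\sigma_x^{j+1}$; $H_S'=\sum_{j=1}^{N-1}d_j x_j\otimes 1_A$; $H_{SA}=\sum_{j=1}^{N-1}\sum_{k=1}^2\sum_{[\alpha]\in\{x,y\}^M}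 g^{j(k)}_{[\alpha]}\, s_j^{(k)}\otimes\sigma_{[\alpha]}$; all coefficients real; $H_0=H_S\otimes 1_A+H_S'+1_S\otimes H_A+H_{SA}$. Condition 1: $c_j\neq 0$ for $j=1,\dots,M-1$. Condition 2: there exist $2(N-1)$ elements $[\beta]_1,\dots,[\beta]_{2(N-1)}$ of $\{x,y\}^M$ such that the $2(N-1)\times 2(N-1)$ matrix $G$ whose $r$-th row is $(g^{1(1)}_{[\beta]_r},\dots,g^{(N-1)(1)}_{[\beta]_r},g^{1(2)}_{[\beta]_r},\dots,g^{(N-1)(2)}_{[\beta]_r})$ has nonzero determinant. *)

theory Defs
  imports Complex_Main "Jordan_Normal_Form.Matrix" "Jordan_Normal_Form.Determinant"
begin

text \<open>The basis vector |j> of C^N (j = 1..N) is index j-1.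
  The total space C^N (x) (C^2)^(x M) has dimension N * 2^M, with the Kronecker
  product ordering (system factor first, then qubit 1, ..., qubit M).\<close>

datatype pauli = P0 | PX | PY | PZ

definition kron :: "complex mat \<Rightarrow> complex mat \<Rightarrow> complex mat" where
  "kron A B = mat (dim_row A * dim_row B) (dim_col A * dim_col B)
     (\<lambda>(i,j). A $$ (i div dim_row B, j div dim_col B) * B $$ (i mod dim_row B, j mod dim_col B))"

definition pauli_mat :: "pauli \<Rightarrow> complex mat" where
  "pauli_mat p = (case p of
      P0 \<Rightarrow> mat_of_rows_list 2 [[1,0],[0,1]]
    | PX \<Rightarrow> mat_of_rows_list 2 [[0,1],[1,0]]
    | PY \<Rightarrow> mat_of_rows_list 2 [[0,-\<i>],[\<i>,0]]
    | PZ \<Rightarrow> mat_of_rows_list 2 [[1,0],[0,-1]])"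

fun sigma_word :: "pauli list \<Rightarrow> complex mat" where
  "sigma_word [] = 1\<^sub>m 1"
| "sigma_word (p # ps) = kron (pauli_mat p) (sigma_word ps)"

definition sigma_on :: "nat \<Rightarrow> nat \<Rightarrow> pauli \<Rightarrow> complex mat" where
  "sigma_on M j a = sigma_word ((replicate M P0)[j - 1 := a])"

definition ejk :: "nat \<Rightarrow> nat \<Rightarrow> nat \<Rightarrow> complex mat" where
  "ejk N j k = mat N N (\<lambda>(a,b). if a = j - 1 \<and> b = k - 1 then 1 else 0)"

definition xjk :: "nat \<Rightarrow> nat \<Rightarrow> nat \<Rightarrow> complex mat" where
  "xjk N j k = ejk N j k + ejk N k j"

definition yjk :: "nat \<Rightarrow> nat \<Rightarrow> nat \<Rightarrow> complex mat" where
  "yjk N j k = \<i> \<cdot>\<^sub>m (ejk N j k - ejk N k j)"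

definition s_op :: "nat \<Rightarrow> nat \<Rightarrow> nat \<Rightarrow> complex mat" where
  "s_op N j k = (if k = 1 then xjk N j (j+1) else yjk N j (j+1))"

definition msum :: "nat \<Rightarrow> ('b \<Rightarrow> complex mat) \<Rightarrow> 'b set \<Rightarrow> complex mat" where
  "msum n f A = mat n n (\<lambda>ij. \<Sum>a\<in>A. f a $$ ij)"

definition xy_words :: "nat \<Rightarrow> pauli list set" where
  "xy_words M = {w. length w = M \<and> set w \<subseteq> {PX, PY}}"

definition all_words :: "nat \<Rightarrow> pauli list set" where
  "all_words M = {w. length w = M}"

definition H_S :: "nat \<Rightarrow> (nat \<Rightarrow> real) \<Rightarrow> complex mat" where
  "H_S N E = msum N (\<lambda>j. complex_of_real (E j) \<cdot>\<^sub>m ejk N j j) {1..N}"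

definition H_A :: "nat \<Rightarrow> real \<Rightarrow> (nat \<Rightarrow> real) \<Rightarrow> (nat \<Rightarrow> real) \<Rightarrow> complex mat" where
  "H_A M hbar \<omega> c =
     msum (2^M) (\<lambda>j. complex_of_real (hbar * \<omega> j) \<cdot>\<^sub>m sigma_on M j PZ) {1..M}
   + msum (2^M) (\<lambda>j. complex_of_real (c j) \<cdot>\<^sub>m (sigma_on M j PX * sigma_on M (j+1) PX)) {1..M-1}"

definition H_S' :: "nat \<Rightarrow> nat \<Rightarrow> (nat \<Rightarrow> real) \<Rightarrow> complex mat" where
  "H_S' N M d = msum (N * 2^M) (\<lambda>j. complex_of_real (d j) \<cdot>\<^sub>m kron (xjk N j (j+1)) (1\<^sub>m (2^M))) {1..N-1}"

definition H_SA :: "nat \<Rightarrow> nat \<Rightarrow> (nat \<Rightarrow> nat \<Rightarrow> pauli list \<Rightarrow> real) \<Rightarrow> complex mat" where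
  "H_SA N M g = msum (N * 2^M)
     (\<lambda>(j,k,w). complex_of_real (g j k w) \<cdot>\<^sub>m kron (s_op N j k) (sigma_word w))
     ({1..N-1} \<times> {1,2} \<times> xy_words M)"

definition H0 :: "nat \<Rightarrow> nat \<Rightarrow> (nat \<Rightarrow> real) \<Rightarrow> real \<Rightarrow> (nat \<Rightarrow> real) \<Rightarrow> (nat \<Rightarrow> real)
                  \<Rightarrow> (nat \<Rightarrow> real) \<Rightarrow> (nat \<Rightarrow> nat \<Rightarrow> pauli list \<Rightarrow> real) \<Rightarrow> complex mat" where
  "H0 N M E hbar \<omega> c d g =
     kron (H_S N E) (1\<^sub>m (2^M)) + H_S' N M d + kron (1\<^sub>m N) (H_A M hbar \<omega> c) + H_SA N M g"

inductive_set real_lie_closure :: "complex mat set \<Rightarrow> complex mat set" for G where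
  gen: "A \<in> G \<Longrightarrow> A \<in> real_lie_closure G"
| add: "A \<in> real_lie_closure G \<Longrightarrow> B \<in> real_lie_closure G \<Longrightarrow> A + B \<in> real_lie_closure G"
| smult: "A \<in> real_lie_closure G \<Longrightarrow> complex_of_real r \<cdot>\<^sub>m A \<in> real_lie_closure G"
| comm: "A \<in> real_lie_closure G \<Longrightarrow> B \<in> real_lie_closure G \<Longrightarrow> A * B - B * A \<in> real_lie_closure G"

definition ctrl_lie_algebra :: "nat \<Rightarrow> nat \<Rightarrow> complex mat \<Rightarrow> complex mat set" where
  "ctrl_lie_algebra N M H = real_lie_closure
     ({\<i> \<cdot>\<^sub>m H} \<union> {\<i> \<cdot>\<^sub>m kron (1\<^sub>m N) (sigma_on M j a) | j a. j \<in> {1..M} \<and> a \<in> {PX, PY}})"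

text \<open>Condition 2 matrix: row r (0-based) is
  (g^{1(1)}_{beta_r},...,g^{(N-1)(1)}_{beta_r}, g^{1(2)}_{beta_r},...,g^{(N-1)(2)}_{beta_r}).\<close>
definition G_mat :: "nat \<Rightarrow> (nat \<Rightarrow> nat \<Rightarrow> pauli list \<Rightarrow> real) \<Rightarrow> (nat \<Rightarrow> pauli list) \<Rightarrow> real mat" where
  "G_mat N g \<beta> = mat (2*(N-1)) (2*(N-1))
     (\<lambda>(r,col). if col < N - 1 then g (col + 1) 1 (\<beta> r) else g (col - (N-1) + 1) 2 (\<beta> r))"

definition condition1 :: "nat \<Rightarrow> (nat \<Rightarrow> real) \<Rightarrow> bool" where
  "condition1 M c \<longleftrightarrow> (\<forall>j\<in>{1..M-1}. c j \<noteq> 0)"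

definition condition2 :: "nat \<Rightarrow> nat \<Rightarrow> (nat \<Rightarrow> nat \<Rightarrow> pauli list \<Rightarrow> real) \<Rightarrow> bool" where
  "condition2 N M g \<longleftrightarrow> (\<exists>\<beta>. (\<forall>r < 2*(N-1). \<beta> r \<in> xy_words M) \<and> det (G_mat N g \<beta>) \<noteq> 0)"

end

(*
  Write P_w for i (1_S (x) sigma_w). If the Pauli words w and v anticommute, the commutator
  [P_w, P_v] is a nonzero real multiple of P_(wv), so the words w with P_w in the Lie algebra L
  are closed under anticommuting products. Every single-qubit word lies in L (sigma_z^j comes
  from [sigma_x^j, sigma_y^j]), and every non-identity word is an anticommuting product of
  single-qubit words and the nearest-neighbour couplings sigma_x^j sigma_x^(j+1).

  The couplings are extracted from i H_0. Since i Z_p, with Z_p = 1_S (x) sigma_z^p, lies in L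
  and Z_p squares to 1, the double commutator with i Z_p shows that L is closed under
  Y |-> Z_p Y Z_p, hence under the projections onto the parts of Y commuting resp.
  anticommuting with Z_p. Keeping the terms that anticommute with Z_j and Z_(j+1) and commute
  with Z_k for a third qubit k (here M > 2 is used) removes H_S, H_S', the sigma_z part of H_A
  and all of H_SA (whose accessor factors anticommute with every Z_p), and leaves
  c_j sigma_x^j sigma_x^(j+1). Condition 1 makes c_j nonzero.
*)
theory Submission
  imports Defs
begin

section \<open>Kronecker products and finite sums of matrices\<close>

lemma smult_smult_mat: "a \<cdot>\<^sub>m (b \<cdot>\<^sub>m A) = (a * b) \<cdot>\<^sub>m (A :: 'a :: semigroup_mult mat)"
  by (rule eq_matI) (auto simp: mult.assoc)

lemma one_smult_mat [simp]: "(1 :: 'a :: monoid_mult) \<cdot>\<^sub>m A = A"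
  by (rule eq_matI) auto

lemma div_mod_less_mult: "(i :: nat) < a * b \<Longrightarrow> i div b < a \<and> i mod b < b"
  by (metis less_mult_imp_div_less mod_less_divisor mult_zero_right not_less_zero zero_less_iff_neq_zero)

lemma sum_lessThan_mult_div_mod:
  fixes f :: "nat \<Rightarrow> nat \<Rightarrow> 'a :: comm_monoid_add"
  assumes "b > 0"
  shows "(\<Sum>t<a * b. f (t div b) (t mod b)) = (\<Sum>s<a. \<Sum>u<b. f s u)"
proof -
  have "(\<Sum>t<a * b. f (t div b) (t mod b)) = (\<Sum>s<a. \<Sum>t\<in>{s * b..<s * b + b}. f (t div b) (t mod b))"
    by (rule sum.nat_group[symmetric])
  also have "\<dots> = (\<Sum>s<a. \<Sum>u<b. f s u)"
  proof (rule sum.cong [OF refl])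
    fix s
    have "(\<Sum>t\<in>{s * b..<s * b + b}. f (t div b) (t mod b)) = (\<Sum>u<b. f ((u + s * b) div b) ((u + s * b) mod b))"
      by (rule sum.reindex_bij_witness[of _ "\<lambda>u. u + s * b" "\<lambda>t. t - s * b"]) auto
    also have "\<dots> = (\<Sum>u<b. f s u)"
      using assms by (intro sum.cong) auto
    finally show "(\<Sum>t\<in>{s * b..<s * b + b}. f (t div b) (t mod b)) = (\<Sum>u<b. f s u)" .
  qed
  finally show ?thesis .
qed

lemma dim_kron [simp]:
  "dim_row (kron A B) = dim_row A * dim_row B" "dim_col (kron A B) = dim_col A * dim_col B"
  by (simp_all add: kron_def)

lemma kron_carrier_square:
  "A \<in> carrier_mat a a \<Longrightarrow> B \<in> carrier_mat b b \<Longrightarrow> kron A B \<in> carrier_mat (a * b) (a * b)"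
  by auto

lemma index_kron:
  "i < dim_row A * dim_row B \<Longrightarrow> j < dim_col A * dim_col B \<Longrightarrow>
   kron A B $$ (i, j) = A $$ (i div dim_row B, j div dim_col B) * B $$ (i mod dim_row B, j mod dim_col B)"
  by (simp add: kron_def)

lemma kron_mult:
  assumes A: "A \<in> carrier_mat a1 a2" and C: "C \<in> carrier_mat a2 a3"
    and B: "B \<in> carrier_mat b1 b2" and D: "D \<in> carrier_mat b2 b3" and "b2 > 0"
  shows "kron A B * kron C D = kron (A * C) (B * D)"
proof (rule eq_matI)
  fix i j assume "i < dim_row (kron (A * C) (B * D))" "j < dim_col (kron (A * C) (B * D))"
  hence i: "i < a1 * b1" and j: "j < a3 * b3" using A B C D by auto
  have "(kron A B * kron C D) $$ (i, j) = (\<Sum>t<a2 * b2. kron A B $$ (i, t) * kron C D $$ (t, j))"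
    using A B C D i j by (simp add: index_mult_mat scalar_prod_def lessThan_atLeast0)
  also have "\<dots> = (\<Sum>t<a2 * b2. (A $$ (i div b1, t div b2) * B $$ (i mod b1, t mod b2)) *
                                   (C $$ (t div b2, j div b3) * D $$ (t mod b2, j mod b3)))"
    using A B C D i j by (intro sum.cong refl) (simp add: index_kron)
  also have "\<dots> = (\<Sum>s<a2. \<Sum>u<b2. (A $$ (i div b1, s) * B $$ (i mod b1, u)) *
                                   (C $$ (s, j div b3) * D $$ (u, j mod b3)))"
    by (rule sum_lessThan_mult_div_mod[OF \<open>b2 > 0\<close>])
  also have "\<dots> = (\<Sum>s<a2. A $$ (i div b1, s) * C $$ (s, j div b3)) *
                 (\<Sum>u<b2. B $$ (i mod b1, u) * D $$ (u, j mod b3))"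
    by (simp add: sum_product mult_ac)
  also have "\<dots> = kron (A * C) (B * D) $$ (i, j)"
    using A B C D i j div_mod_less_mult[OF i] div_mod_less_mult[OF j]
    by (simp add: index_kron index_mult_mat scalar_prod_def lessThan_atLeast0)
  finally show "(kron A B * kron C D) $$ (i, j) = kron (A * C) (B * D) $$ (i, j)" .
qed (use A B C D in auto)

lemma kron_smult_left: "kron (a \<cdot>\<^sub>m A) B = a \<cdot>\<^sub>m kron A B"
  by (rule eq_matI) (auto simp: kron_def dest!: div_mod_less_mult)

lemma kron_smult_right: "kron A (b \<cdot>\<^sub>m B) = b \<cdot>\<^sub>m kron A B"
  by (rule eq_matI) (auto simp: kron_def dest!: div_mod_less_mult)

lemma kron_one: "kron (1\<^sub>m a) (1\<^sub>m b) = 1\<^sub>m (a * b)"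
proof (rule eq_matI)
  fix i j assume "i < dim_row (1\<^sub>m (a * b))" "j < dim_col (1\<^sub>m (a * b))"
  hence ij: "i < a * b" "j < a * b" by auto
  have "i div b = j div b \<and> i mod b = j mod b \<longleftrightarrow> i = j"
    by (metis div_mult_mod_eq)
  thus "kron (1\<^sub>m a) (1\<^sub>m b) $$ (i, j) = 1\<^sub>m (a * b) $$ (i, j)"
    using ij div_mod_less_mult[OF ij(1)] div_mod_less_mult[OF ij(2)] by (auto simp: index_kron)
qed auto

lemma kron_add_right:
  assumes "B \<in> carrier_mat b b" "C \<in> carrier_mat b b"
  shows "kron A (B + C) = kron A B + kron A C"
  using assms by (intro eq_matI) (auto simp: index_kron algebra_simps dest!: div_mod_less_mult)

lemma msum_carrier [simp]: "msum n f S \<in> carrier_mat n n"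
  by (simp add: msum_def)

lemma dim_msum [simp]: "dim_row (msum n f S) = n" "dim_col (msum n f S) = n"
  by (simp_all add: msum_def)

lemma index_msum: "i < n \<Longrightarrow> j < n \<Longrightarrow> msum n f S $$ (i, j) = (\<Sum>a\<in>S. f a $$ (i, j))"
  by (simp add: msum_def)

lemma msum_cong: "(\<And>a. a \<in> S \<Longrightarrow> f a = g a) \<Longrightarrow> msum n f S = msum n g S"
  unfolding msum_def by (intro arg_cong[where f = "mat n n"] ext sum.cong) auto

lemma mult_msum:
  assumes A: "A \<in> carrier_mat n n" and f: "\<And>a. a \<in> S \<Longrightarrow> f a \<in> carrier_mat n n"
  shows "A * msum n f S = msum n (\<lambda>a. A * f a) S"
proof (rule eq_matI)
  fix i j assume "i < dim_row (msum n (\<lambda>a. A * f a) S)" "j < dim_col (msum n (\<lambda>a. A * f a) S)"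
  hence ij: "i < n" "j < n" by auto
  have "(A * msum n f S) $$ (i, j) = (\<Sum>a\<in>S. \<Sum>k = 0..<n. A $$ (i, k) * f a $$ (k, j))"
    using A ij by (simp add: scalar_prod_def index_msum sum_distrib_left sum.swap[of _ "{0..<n}"])
  also have "\<dots> = (\<Sum>a\<in>S. (A * f a) $$ (i, j))"
    using A f ij by (intro sum.cong) (fastforce simp: scalar_prod_def)+
  also have "\<dots> = msum n (\<lambda>a. A * f a) S $$ (i, j)"
    using ij by (simp add: index_msum)
  finally show "(A * msum n f S) $$ (i, j) = msum n (\<lambda>a. A * f a) S $$ (i, j)" .
qed (use A in auto)

lemma msum_mult:
  assumes B: "B \<in> carrier_mat n n" and f: "\<And>a. a \<in> S \<Longrightarrow> f a \<in> carrier_mat n n"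
  shows "msum n f S * B = msum n (\<lambda>a. f a * B) S"
proof (rule eq_matI)
  fix i j assume "i < dim_row (msum n (\<lambda>a. f a * B) S)" "j < dim_col (msum n (\<lambda>a. f a * B) S)"
  hence ij: "i < n" "j < n" by auto
  have "(msum n f S * B) $$ (i, j) = (\<Sum>a\<in>S. \<Sum>k = 0..<n. f a $$ (i, k) * B $$ (k, j))"
    using B ij by (simp add: scalar_prod_def index_msum sum_distrib_right sum.swap[of _ "{0..<n}"])
  also have "\<dots> = (\<Sum>a\<in>S. (f a * B) $$ (i, j))"
    using B f ij by (intro sum.cong) (fastforce simp: scalar_prod_def)+
  also have "\<dots> = msum n (\<lambda>a. f a * B) S $$ (i, j)"
    using ij by (simp add: index_msum)
  finally show "(msum n f S * B) $$ (i, j) = msum n (\<lambda>a. f a * B) S $$ (i, j)" .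
qed (use B in auto)

lemma msum_add:
  assumes f: "\<And>a. a \<in> S \<Longrightarrow> f a \<in> carrier_mat n n" and g: "\<And>a. a \<in> S \<Longrightarrow> g a \<in> carrier_mat n n"
  shows "msum n f S + msum n g S = msum n (\<lambda>a. f a + g a) S"
proof (rule eq_matI)
  fix i j assume "i < dim_row (msum n (\<lambda>a. f a + g a) S)" "j < dim_col (msum n (\<lambda>a. f a + g a) S)"
  hence ij: "i < n" "j < n" by auto
  hence "\<And>a. a \<in> S \<Longrightarrow> (f a + g a) $$ (i, j) = f a $$ (i, j) + g a $$ (i, j)"
    using f g by fastforce
  thus "(msum n f S + msum n g S) $$ (i, j) = msum n (\<lambda>a. f a + g a) S $$ (i, j)"
    using ij by (simp add: index_msum sum.distrib)
qed auto

lemma smult_msum: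
  assumes f: "\<And>a. a \<in> S \<Longrightarrow> f a \<in> carrier_mat n n"
  shows "c \<cdot>\<^sub>m msum n f S = msum n (\<lambda>a. c \<cdot>\<^sub>m f a) S"
proof (rule eq_matI)
  fix i j assume "i < dim_row (msum n (\<lambda>a. c \<cdot>\<^sub>m f a) S)" "j < dim_col (msum n (\<lambda>a. c \<cdot>\<^sub>m f a) S)"
  hence ij: "i < n" "j < n" by auto
  hence "\<And>a. a \<in> S \<Longrightarrow> (c \<cdot>\<^sub>m f a) $$ (i, j) = c * f a $$ (i, j)"
    using f by fastforce
  thus "(c \<cdot>\<^sub>m msum n f S) $$ (i, j) = msum n (\<lambda>a. c \<cdot>\<^sub>m f a) S $$ (i, j)"
    using ij by (simp add: index_msum sum_distrib_left)
qed auto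

lemma kron_msum:
  assumes A: "A \<in> carrier_mat p p" and f: "\<And>a. a \<in> S \<Longrightarrow> f a \<in> carrier_mat n n"
  shows "kron A (msum n f S) = msum (p * n) (\<lambda>a. kron A (f a)) S"
proof (rule eq_matI)
  fix i j assume "i < dim_row (msum (p * n) (\<lambda>a. kron A (f a)) S)"
    "j < dim_col (msum (p * n) (\<lambda>a. kron A (f a)) S)"
  hence ij: "i < p * n" "j < p * n" by auto
  hence "\<And>a. a \<in> S \<Longrightarrow> kron A (f a) $$ (i, j) = A $$ (i div n, j div n) * f a $$ (i mod n, j mod n)"
    using A f by (fastforce simp: index_kron)
  thus "kron A (msum n f S) $$ (i, j) = msum (p * n) (\<lambda>a. kron A (f a)) S $$ (i, j)"
    using A ij div_mod_less_mult[OF ij(1)] div_mod_less_mult[OF ij(2)]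
    by (simp add: index_kron index_msum sum_distrib_left)
qed (use A in auto)

lemma msum_delta:
  assumes "finite S" "j \<in> S" "f j \<in> carrier_mat n n"
  shows "msum n (\<lambda>a. if a = j then f a else 0\<^sub>m n n) S = f j"
proof (rule eq_matI)
  fix i k assume "i < dim_row (f j)" "k < dim_col (f j)"
  hence ik: "i < n" "k < n" using assms by auto
  have "(\<Sum>a\<in>S. (if a = j then f a else 0\<^sub>m n n) $$ (i, k)) = (\<Sum>a\<in>S. if a = j then f j $$ (i, k) else 0)"
    using ik by (intro sum.cong) auto
  thus "msum n (\<lambda>a. if a = j then f a else 0\<^sub>m n n) S $$ (i, k) = f j $$ (i, k)"
    using assms ik by (simp add: index_msum)
qed (use assms in auto)

lemma msum_zero: "msum n (\<lambda>a. 0\<^sub>m n n) S = 0\<^sub>m n n"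
  by (intro eq_matI) (auto simp: index_msum)

section \<open>Pauli words\<close>

fun pauli_mul :: "pauli \<Rightarrow> pauli \<Rightarrow> pauli" where
  "pauli_mul P0 b = b"
| "pauli_mul a P0 = a"
| "pauli_mul PX PX = P0" | "pauli_mul PY PY = P0" | "pauli_mul PZ PZ = P0"
| "pauli_mul PX PY = PZ" | "pauli_mul PY PX = PZ"
| "pauli_mul PY PZ = PX" | "pauli_mul PZ PY = PX"
| "pauli_mul PZ PX = PY" | "pauli_mul PX PZ = PY"

fun pauli_phase :: "pauli \<Rightarrow> pauli \<Rightarrow> complex" where
  "pauli_phase PX PY = \<i>" | "pauli_phase PY PX = -\<i>"
| "pauli_phase PY PZ = \<i>" | "pauli_phase PZ PY = -\<i>"
| "pauli_phase PZ PX = \<i>" | "pauli_phase PX PZ = -\<i>"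
| "pauli_phase _ _ = 1"

definition pauli_sign :: "pauli \<Rightarrow> pauli \<Rightarrow> real" where
  "pauli_sign a b = (if a \<noteq> b \<and> a \<noteq> P0 \<and> b \<noteq> P0 then -1 else 1)"

lemma pauli_mat_carrier [simp]: "pauli_mat a \<in> carrier_mat 2 2"
  by (cases a) (auto simp: pauli_mat_def mat_of_rows_list_def)

lemma dim_pauli_mat [simp]: "dim_row (pauli_mat a) = 2" "dim_col (pauli_mat a) = 2"
  using carrier_matD[OF pauli_mat_carrier] by blast+

lemma pauli_mat_mult: "pauli_mat a * pauli_mat b = pauli_phase a b \<cdot>\<^sub>m pauli_mat (pauli_mul a b)"
proof (rule eq_matI)
  fix i j assume "i < dim_row (pauli_phase a b \<cdot>\<^sub>m pauli_mat (pauli_mul a b))"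
    "j < dim_col (pauli_phase a b \<cdot>\<^sub>m pauli_mat (pauli_mul a b))"
  hence "i < 2" "j < 2" by auto
  thus "(pauli_mat a * pauli_mat b) $$ (i, j) = (pauli_phase a b \<cdot>\<^sub>m pauli_mat (pauli_mul a b)) $$ (i, j)"
    by (cases a; cases b; auto simp: less_2_cases_iff pauli_mat_def mat_of_rows_list_def scalar_prod_def)
qed auto

lemma pauli_mat_P0: "pauli_mat P0 = 1\<^sub>m 2"
  by (rule eq_matI) (auto simp: pauli_mat_def mat_of_rows_list_def less_2_cases_iff)

lemma pauli_mul_commute: "pauli_mul a b = pauli_mul b a"
  by (cases a; cases b) simp_all

lemma pauli_mul_P0_right [simp]: "pauli_mul a P0 = a"
  by (cases a) simp_all

lemma pauli_mul_cancel_left [simp]: "pauli_mul a (pauli_mul a b) = b"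
  by (cases a; cases b) simp_all

lemma pauli_mul_cancel_right [simp]: "pauli_mul (pauli_mul a b) b = a"
  by (cases a; cases b) simp_all

lemma pauli_mul_eq_P0_iff [simp]: "pauli_mul a b = P0 \<longleftrightarrow> a = b"
  by (cases a; cases b) simp_all

lemma pauli_phase_self [simp]: "pauli_phase a a = 1"
  by (cases a) simp_all

lemma pauli_phase_nonzero: "pauli_phase a b \<noteq> 0"
  by (cases a; cases b) simp_all

lemma pauli_phase_commute: "pauli_phase b a = pauli_sign a b * pauli_phase a b"
  by (cases a; cases b) (simp_all add: pauli_sign_def)

lemma pauli_phase_swap: "pauli_phase b a = cnj (pauli_phase a b)"
  by (cases a; cases b) simp_all

lemma pauli_sign_P0 [simp]: "pauli_sign a P0 = 1" "pauli_sign P0 a = 1"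
  by (simp_all add: pauli_sign_def)

lemma pauli_sign_self [simp]: "pauli_sign a a = 1"
  by (simp add: pauli_sign_def)

lemma pauli_sign_mul_right: "a \<noteq> P0 \<Longrightarrow> b \<noteq> P0 \<Longrightarrow> a \<noteq> b \<Longrightarrow> pauli_sign a (pauli_mul a b) = -1"
  by (cases a; cases b) (simp_all add: pauli_sign_def)

lemma pauli_sign_mul_left: "a \<noteq> P0 \<Longrightarrow> b \<noteq> P0 \<Longrightarrow> a \<noteq> b \<Longrightarrow> pauli_sign (pauli_mul a b) b = -1"
  by (cases a; cases b) (simp_all add: pauli_sign_def)

lemma pauli_sign_PZ: "pauli_sign a PZ = (if a \<in> {PX, PY} then -1 else 1)"
  by (cases a) (simp_all add: pauli_sign_def)

lemma exists_other_pauli: obtains c where "c \<noteq> P0" "c \<noteq> a"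
  by (cases a) blast+

definition word_mul :: "pauli list \<Rightarrow> pauli list \<Rightarrow> pauli list" where
  "word_mul w v = map2 pauli_mul w v"

definition word_phase :: "pauli list \<Rightarrow> pauli list \<Rightarrow> complex" where
  "word_phase w v = prod_list (map2 pauli_phase w v)"

definition word_sign :: "pauli list \<Rightarrow> pauli list \<Rightarrow> real" where
  "word_sign w v = prod_list (map2 pauli_sign w v)"

lemma sigma_word_carrier [simp]: "sigma_word w \<in> carrier_mat (2 ^ length w) (2 ^ length w)"
  by (induction w) auto

lemma dim_sigma_word [simp]:
  "dim_row (sigma_word w) = 2 ^ length w" "dim_col (sigma_word w) = 2 ^ length w"
  using carrier_matD[OF sigma_word_carrier] by blast+

lemma sigma_word_identity: "sigma_word (replicate n P0) = 1\<^sub>m (2 ^ n)"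
  by (induction n) (auto simp: pauli_mat_P0 kron_one)

lemma sigma_word_mult:
  "length w = length v \<Longrightarrow> sigma_word w * sigma_word v = word_phase w v \<cdot>\<^sub>m sigma_word (word_mul w v)"
proof (induction w v rule: list_induct2)
  case Nil
  thus ?case by (simp add: word_phase_def word_mul_def)
next
  case (Cons a w b v)
  have "sigma_word (a # w) * sigma_word (b # v) = kron (pauli_mat a * pauli_mat b) (sigma_word w * sigma_word v)"
    unfolding sigma_word.simps
    by (rule kron_mult[of _ 2 2 _ 2 _ "2 ^ length w" "2 ^ length w" _ "2 ^ length w"])
      (use Cons.hyps sigma_word_carrier[of v] in auto)
  thus ?case
    by (simp add: Cons.IH pauli_mat_mult kron_smult_left kron_smult_right smult_smult_mat mult.commute
        word_phase_def word_mul_def)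
qed

lemma word_phase_commute: "length w = length v \<Longrightarrow> word_phase v w = word_sign w v * word_phase w v"
  unfolding word_phase_def word_sign_def
proof (induction w v rule: list_induct2)
  case (Cons a w b v)
  thus ?case by (simp add: pauli_phase_commute[of b a])
qed simp

lemma word_phase_swap: "length w = length v \<Longrightarrow> word_phase v w = cnj (word_phase w v)"
  unfolding word_phase_def
proof (induction w v rule: list_induct2)
  case (Cons a w b v)
  thus ?case by (simp add: pauli_phase_swap[of a b])
qed simp

lemma word_phase_nonzero: "word_phase w v \<noteq> 0"
  unfolding word_phase_def
  by (induction w v rule: list_induct2') (simp_all add: pauli_phase_nonzero)

lemma word_mul_commute: "word_mul w v = word_mul v w"
  unfolding word_mul_def
  by (induction w v rule: list_induct2') (simp_all add: pauli_mul_commute)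

lemma word_phase_self: "word_phase w w = 1"
  unfolding word_phase_def by (induction w) simp_all

lemma word_mul_self: "word_mul w w = replicate (length w) P0"
  unfolding word_mul_def by (induction w) simp_all

text \<open>Swapping anticommuting factors negates the phase, and swapping any factors
  conjugates it.\<close>
lemma word_phase_anticommuting:
  assumes "length w = length v" "word_sign w v = -1"
  obtains r :: real where "r \<noteq> 0" "word_phase w v = \<i> * r"
proof -
  let ?p = "word_phase w v"
  have "cnj ?p = - ?p"
    using word_phase_commute[OF assms(1)] word_phase_swap[OF assms(1)] assms(2) by simp
  hence "Re ?p = 0" by (simp add: complex_eq_iff)
  hence "?p = \<i> * Im ?p" "Im ?p \<noteq> 0"
    using word_phase_nonzero[of w v] by (simp_all add: complex_eq_iff)
  thus ?thesis using that by blast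
qed

lemma sigma_word_square: "sigma_word w * sigma_word w = 1\<^sub>m (2 ^ length w)"
  by (simp add: sigma_word_mult word_phase_self word_mul_self sigma_word_identity)

lemma sigma_word_commute:
  assumes "length v = length w"
  shows "sigma_word v * sigma_word w = word_sign w v \<cdot>\<^sub>m (sigma_word w * sigma_word v)"
  using assms by (simp add: sigma_word_mult word_phase_commute[of w v] word_mul_commute[of v w]
      smult_smult_mat)

lemma sigma_word_conj:
  assumes "length v = length w"
  shows "sigma_word v * sigma_word w * sigma_word v = word_sign w v \<cdot>\<^sub>m sigma_word w"
proof -
  let ?n = "2 ^ length w"
  have v: "sigma_word v \<in> carrier_mat ?n ?n" and w: "sigma_word w \<in> carrier_mat ?n ?n"
    using assms by auto
  have "sigma_word v * sigma_word w * sigma_word v = word_sign w v \<cdot>\<^sub>m (sigma_word w * sigma_word v) * sigma_word v"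
    by (simp add: sigma_word_commute[OF assms])
  also have "\<dots> = word_sign w v \<cdot>\<^sub>m (sigma_word w * (sigma_word v * sigma_word v))"
    by (simp add: mult_smult_assoc_mat[OF mult_carrier_mat[OF w v] v] assoc_mult_mat[OF w v v])
  also have "\<dots> = word_sign w v \<cdot>\<^sub>m sigma_word w"
    using assms w by (simp add: sigma_word_square)
  finally show ?thesis .
qed

lemma word_mul_list_update:
  "length u = length v \<Longrightarrow> word_mul u (v[i := b]) = (word_mul u v)[i := pauli_mul (u ! i) b]"
  unfolding word_mul_def
  by (induction u v arbitrary: i rule: list_induct2) (auto split: nat.split)

lemma word_sign_list_update:
  "length u = length v \<Longrightarrow> i < length v \<Longrightarrow> v ! i = P0 \<Longrightarrow>
   word_sign u (v[i := b]) = pauli_sign (u ! i) b * word_sign u v"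
  unfolding word_sign_def
  by (induction u v arbitrary: i rule: list_induct2) (auto split: nat.split)

lemma word_phase_list_update:
  "length u = length v \<Longrightarrow> i < length v \<Longrightarrow> v ! i = P0 \<Longrightarrow>
   word_phase u (v[i := b]) = pauli_phase (u ! i) b * word_phase u v"
  unfolding word_phase_def
  by (induction u v arbitrary: i rule: list_induct2) (auto split: nat.split)

lemma word_mul_identity [simp]: "length u = n \<Longrightarrow> word_mul u (replicate n P0) = u"
  unfolding word_mul_def by (induction u arbitrary: n) auto

lemma word_sign_identity [simp]: "length u = n \<Longrightarrow> word_sign u (replicate n P0) = 1"
  unfolding word_sign_def by (induction u arbitrary: n) auto

lemma word_phase_identity [simp]: "length u = n \<Longrightarrow> word_phase u (replicate n P0) = 1"
  unfolding word_phase_def by (induction u arbitrary: n) auto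

definition site_word :: "nat \<Rightarrow> nat \<Rightarrow> pauli \<Rightarrow> pauli list" where
  "site_word M p a = (replicate M P0)[p := a]"

definition pair_word :: "nat \<Rightarrow> nat \<Rightarrow> pauli \<Rightarrow> pauli \<Rightarrow> pauli list" where
  "pair_word M p a b = (replicate M P0)[p := a, Suc p := b]"

lemma length_site_word [simp]: "length (site_word M p a) = M"
  by (simp add: site_word_def)

lemma length_pair_word [simp]: "length (pair_word M p a b) = M"
  by (simp add: pair_word_def)

lemma nth_site_word_same [simp]: "p < M \<Longrightarrow> site_word M p a ! p = a"
  by (simp add: site_word_def)

lemma nth_site_word: "q < M \<Longrightarrow> site_word M p a ! q = (if q = p then a else P0)"
  by (simp add: site_word_def nth_list_update)

lemma nth_pair_word:
  "Suc p < M \<Longrightarrow> q < M \<Longrightarrow> pair_word M p a b ! q = (if q = Suc p then b else if q = p then a else P0)"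
  by (simp add: pair_word_def nth_list_update)

lemma sigma_on_site_word: "sigma_on M j a = sigma_word (site_word M (j - 1) a)"
  by (simp add: sigma_on_def site_word_def)

lemma sigma_on_carrier [simp]: "sigma_on M p a \<in> carrier_mat (2 ^ M) (2 ^ M)"
  using sigma_word_carrier[of "site_word M (p - 1) a"] by (simp add: sigma_on_site_word)

lemma word_mul_site_word:
  "length u = M \<Longrightarrow> p < M \<Longrightarrow> word_mul u (site_word M p a) = u[p := pauli_mul (u ! p) a]"
  by (simp add: site_word_def word_mul_list_update)

lemma word_sign_site_word:
  "length u = M \<Longrightarrow> p < M \<Longrightarrow> word_sign u (site_word M p a) = pauli_sign (u ! p) a"
  by (simp add: site_word_def word_sign_list_update)

lemma word_phase_site_word:
  "length u = M \<Longrightarrow> p < M \<Longrightarrow> word_phase u (site_word M p a) = pauli_phase (u ! p) a"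
  by (simp add: site_word_def word_phase_list_update)

lemma word_mul_pair_word:
  "length u = M \<Longrightarrow> Suc p < M \<Longrightarrow>
   word_mul u (pair_word M p a b) = u[p := pauli_mul (u ! p) a, Suc p := pauli_mul (u ! Suc p) b]"
  by (simp add: pair_word_def word_mul_list_update nth_list_update)

lemma word_sign_pair_word:
  "length u = M \<Longrightarrow> Suc p < M \<Longrightarrow>
   word_sign u (pair_word M p a b) = pauli_sign (u ! p) a * pauli_sign (u ! Suc p) b"
  by (simp add: pair_word_def word_sign_list_update nth_list_update)

lemma sigma_on_mult_adjacent:
  assumes "1 \<le> i" "i < M"
  shows "sigma_on M i PX * sigma_on M (i + 1) PX = sigma_word (pair_word M (i - 1) PX PX)"
proof -
  let ?u = "site_word M (i - 1) PX"
  have "?u ! i = P0"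
    using assms by (simp add: site_word_def)
  moreover have "?u[i := PX] = pair_word M (i - 1) PX PX"
    using assms by (simp add: site_word_def pair_word_def)
  ultimately show ?thesis
    using assms by (simp add: sigma_on_site_word sigma_word_mult word_mul_site_word word_phase_site_word)
qed

lemma sigma_z_conj:
  assumes "length w = M" "1 \<le> p" "p \<le> M"
  shows "sigma_on M p PZ * sigma_word w * sigma_on M p PZ = pauli_sign (w ! (p - 1)) PZ \<cdot>\<^sub>m sigma_word w"
  using assms by (simp add: sigma_on_site_word sigma_word_conj word_sign_site_word)

section \<open>Generating all Pauli words by anticommuting products\<close>

definition supported_below :: "nat \<Rightarrow> pauli list \<Rightarrow> bool" where
  "supported_below n w \<longleftrightarrow> (\<forall>k. n \<le> k \<longrightarrow> k < length w \<longrightarrow> w ! k = P0)"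

locale pauli_word_generation =
  fixes M :: nat and P :: "pauli list \<Rightarrow> bool"
  assumes site: "\<And>p a. p < M \<Longrightarrow> a \<noteq> P0 \<Longrightarrow> P (site_word M p a)"
    and adjacent_xx: "\<And>p. Suc p < M \<Longrightarrow> P (pair_word M p PX PX)"
    and anticommuting_mul:
      "\<And>w v. P w \<Longrightarrow> P v \<Longrightarrow> length w = M \<Longrightarrow> length v = M \<Longrightarrow> word_sign w v = -1 \<Longrightarrow> P (word_mul w v)"
begin

lemma update_site:
  assumes "P w" "length w = M" "p < M" "w ! p \<noteq> P0" "b \<noteq> P0"
  shows "P (w[p := b])"
proof (cases "b = w ! p")
  case True
  thus ?thesis using assms(1) by simp
next
  case False
  let ?c = "pauli_mul (w ! p) b"
  have "P (word_mul w (site_word M p ?c))"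
    using assms False
    by (intro anticommuting_mul site) (auto simp: word_sign_site_word pauli_sign_mul_right)
  thus ?thesis
    using assms by (simp add: word_mul_site_word)
qed

lemma pair: "Suc p < M \<Longrightarrow> a \<noteq> P0 \<Longrightarrow> b \<noteq> P0 \<Longrightarrow> P (pair_word M p a b)"
proof -
  assume p: "Suc p < M" and ab: "a \<noteq> P0" "b \<noteq> P0"
  have "P ((pair_word M p PX PX)[p := a])"
    using p ab by (intro update_site adjacent_xx) (auto simp: pair_word_def nth_list_update)
  hence "P ((pair_word M p PX PX)[p := a, Suc p := b])"
    by (rule update_site) (use p ab in \<open>auto simp: pair_word_def nth_list_update\<close>)
  thus ?thesis
    by (simp add: pair_word_def list_update_swap[of p "Suc p"])
qed

text \<open>The induction below removes the last occupied site \<open>n\<close> of a word: the word is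
  the product of a word supported below \<open>n\<close> with a pair word on the sites \<open>n - 1\<close>
  and \<open>n\<close>, up to the letter on site \<open>n - 1\<close>.\<close>

lemma supported_below_Suc_occupied:
  assumes IH: "\<And>v. length v = M \<Longrightarrow> v \<noteq> replicate M P0 \<Longrightarrow> supported_below n v \<Longrightarrow> P v"
    and u: "length u = M" "supported_below (Suc n) u" "n = Suc m" "n < M" "u ! m \<noteq> P0" "u ! n \<noteq> P0"
  shows "P u"
proof -
  obtain c where c: "c \<noteq> P0" "c \<noteq> u ! m" by (rule exists_other_pauli)
  let ?v = "u[n := P0]"
  have "?v ! m \<noteq> P0"
    using u by (simp add: nth_list_update)
  hence "?v \<noteq> replicate M P0"
    using u by (metis Suc_lessD nth_replicate)
  moreover have "supported_below n ?v"
    using u by (auto simp: supported_below_def nth_list_update)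
  ultimately have "P ?v"
    using u by (intro IH) auto
  moreover have "P (pair_word M m c (u ! n))"
    using u c by (intro pair) auto
  ultimately have "P (word_mul ?v (pair_word M m c (u ! n)))"
    using u c by (intro anticommuting_mul) (auto simp: word_sign_pair_word nth_list_update pauli_sign_def)
  also have "word_mul ?v (pair_word M m c (u ! n)) = u[m := pauli_mul (u ! m) c]"
    using u by (simp add: word_mul_pair_word) (auto intro!: nth_equalityI simp: nth_list_update)
  finally have "P (u[m := pauli_mul (u ! m) c, m := u ! m])"
    by (rule update_site) (use u c in \<open>auto simp: nth_list_update\<close>)
  thus ?thesis by simp
qed

text \<open>If site \<open>n - 1\<close> is empty, occupy it first and empty it again with the pair word.\<close>

lemma supported_below_Suc_vacant:
  assumes IH: "\<And>v. length v = M \<Longrightarrow> v \<noteq> replicate M P0 \<Longrightarrow> supported_below n v \<Longrightarrow> P v"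
    and w: "length w = M" "supported_below (Suc n) w" "n = Suc m" "n < M" "w ! m = P0" "w ! n \<noteq> P0"
  shows "P w"
proof -
  obtain d where d: "d \<noteq> P0" "d \<noteq> w ! n" by (rule exists_other_pauli)
  let ?u = "w[m := PX, n := pauli_mul (w ! n) d]"
  have "P ?u"
    using w d by (intro supported_below_Suc_occupied[OF IH, where m = m]) (auto simp: supported_below_def nth_list_update)
  moreover have "P (pair_word M m PX d)"
    using w d by (intro pair) auto
  ultimately have "P (word_mul ?u (pair_word M m PX d))"
    using w d by (intro anticommuting_mul) (auto simp: word_sign_pair_word nth_list_update pauli_sign_mul_left)
  also have "word_mul ?u (pair_word M m PX d) = w"
    using w by (simp add: word_mul_pair_word) (auto intro!: nth_equalityI simp: nth_list_update)
  finally show ?thesis .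
qed

lemma supported_below_Suc:
  assumes IH: "\<And>v. length v = M \<Longrightarrow> v \<noteq> replicate M P0 \<Longrightarrow> supported_below n v \<Longrightarrow> P v"
    and w: "length w = M" "w \<noteq> replicate M P0" "supported_below (Suc n) w"
  shows "P w"
proof (cases "n < M \<and> w ! n \<noteq> P0")
  case False
  have "supported_below n w"
    unfolding supported_below_def
  proof (intro allI impI)
    fix k assume "n \<le> k" "k < length w"
    thus "w ! k = P0"
      using False w by (cases "k = n") (auto simp: supported_below_def)
  qed
  thus ?thesis using IH w by blast
next
  case True
  show ?thesis
  proof (cases n)
    case 0
    have "w = site_word M 0 (w ! 0)"
      using w 0 by (auto simp: supported_below_def site_word_def list_eq_iff_nth_eq nth_list_update)
    thus ?thesis using site True 0 by metis
  next
    case (Suc m)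
    thus ?thesis
      using supported_below_Suc_occupied[OF IH w(1,3)] supported_below_Suc_vacant[OF IH w(1,3)] True
      by (cases "w ! m = P0") auto
  qed
qed

lemma supported_below_nonidentity:
  "length w = M \<Longrightarrow> w \<noteq> replicate M P0 \<Longrightarrow> supported_below n w \<Longrightarrow> P w"
proof (induction n arbitrary: w)
  case 0
  thus ?case by (auto simp: supported_below_def list_eq_iff_nth_eq)
next
  case (Suc n)
  show ?case
    by (rule supported_below_Suc[OF Suc.IH]) (use Suc.prems in auto)
qed

theorem nonidentity: "length w = M \<Longrightarrow> w \<noteq> replicate M P0 \<Longrightarrow> P w"
  by (rule supported_below_nonidentity[of _ M]) (auto simp: supported_below_def)

end

section \<open>Real Lie closures\<close>

lemma real_lie_closure_smult_cancel:
  assumes "complex_of_real r \<cdot>\<^sub>m A \<in> real_lie_closure G" "r \<noteq> 0"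
  shows "A \<in> real_lie_closure G"
proof -
  have "complex_of_real (1 / r) \<cdot>\<^sub>m (complex_of_real r \<cdot>\<^sub>m A) \<in> real_lie_closure G"
    using assms(1) by (rule real_lie_closure.smult)
  thus ?thesis
    using assms(2) by (simp add: smult_smult_mat flip: of_real_mult)
qed

lemma double_commutator_involution:
  assumes K: "K \<in> carrier_mat n n" and Y: "Y \<in> carrier_mat n n" and KK: "K * K = 1\<^sub>m n"
  defines "T \<equiv> \<i> \<cdot>\<^sub>m K"
  shows "T * (T * Y - Y * T) - (T * Y - Y * T) * T = 2 \<cdot>\<^sub>m (K * Y * K) - 2 \<cdot>\<^sub>m Y"
proof -
  have T: "T \<in> carrier_mat n n"
    using K by (simp add: T_def)
  have TT: "T * T = (-1) \<cdot>\<^sub>m 1\<^sub>m n"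
    using K KK by (simp add: T_def mult_smult_assoc_mat[of _ n n] mult_smult_distrib[of _ n n] smult_smult_mat)
  have TTY: "T * (T * Y) = (-1) \<cdot>\<^sub>m Y"
    using T Y TT by (simp add: assoc_mult_mat[symmetric, of T n n T n Y n] mult_smult_assoc_mat[of _ n n])
  have YTT: "Y * T * T = (-1) \<cdot>\<^sub>m Y"
    using T Y TT by (simp add: assoc_mult_mat[of Y n n T n T n] mult_smult_distrib[of Y n n _ n])
  have YK: "Y * K \<in> carrier_mat n n"
    using K Y by simp
  have "T * (Y * T) = \<i> \<cdot>\<^sub>m (K * (\<i> \<cdot>\<^sub>m (Y * K)))"
    unfolding T_def mult_smult_distrib[OF Y K] by (rule mult_smult_assoc_mat[OF K smult_carrier_mat[OF YK]])
  also have "\<dots> = (-1) \<cdot>\<^sub>m (K * Y * K)"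
    by (simp add: mult_smult_distrib[OF K YK] smult_smult_mat assoc_mult_mat[OF K Y K])
  finally have TYT: "T * (Y * T) = (-1) \<cdot>\<^sub>m (K * Y * K)" .
  have "T * (T * Y - Y * T) - (T * Y - Y * T) * T = (T * (T * Y) - T * (Y * T)) - (T * (Y * T) - Y * T * T)"
    using T Y by (simp add: mult_minus_distrib_mat[of T n n _ n] minus_mult_distrib_mat[of _ n n _ T n]
        assoc_mult_mat[of T n n Y n T n])
  also have "\<dots> = 2 \<cdot>\<^sub>m (K * Y * K) - 2 \<cdot>\<^sub>m Y"
    unfolding TTY YTT TYT using K Y by (intro eq_matI) auto
  finally show ?thesis .
qed

lemma real_lie_closure_conj_involution:
  assumes "\<i> \<cdot>\<^sub>m K \<in> real_lie_closure G" "Y \<in> real_lie_closure G"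
    and "K \<in> carrier_mat n n" "Y \<in> carrier_mat n n" "K * K = 1\<^sub>m n"
  shows "K * Y * K \<in> real_lie_closure G"
proof -
  let ?T = "\<i> \<cdot>\<^sub>m K"
  have "complex_of_real (1/2) \<cdot>\<^sub>m (?T * (?T * Y - Y * ?T) - (?T * Y - Y * ?T) * ?T) + Y \<in> real_lie_closure G"
    using assms(1,2) by (intro real_lie_closure.add real_lie_closure.smult real_lie_closure.comm)
  also have "complex_of_real (1/2) \<cdot>\<^sub>m (?T * (?T * Y - Y * ?T) - (?T * Y - Y * ?T) * ?T) + Y = K * Y * K"
    unfolding double_commutator_involution[OF assms(3-5)] using assms(3,4)
    by (intro eq_matI) (auto simp: field_simps)
  finally show ?thesis .
qed

text \<open>For an involution \<open>K\<close> and \<open>s = \<plusminus>1\<close>, \<open>conj_proj K s\<close> projects onto the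
  \<open>s\<close>-eigenspace of \<open>Y \<mapsto> K * Y * K\<close>.\<close>
definition conj_proj :: "complex mat \<Rightarrow> real \<Rightarrow> complex mat \<Rightarrow> complex mat" where
  "conj_proj K s Y = complex_of_real (1/2) \<cdot>\<^sub>m (Y + complex_of_real s \<cdot>\<^sub>m (K * Y * K))"

lemma conj_proj_carrier:
  "K \<in> carrier_mat n n \<Longrightarrow> Y \<in> carrier_mat n n \<Longrightarrow> conj_proj K s Y \<in> carrier_mat n n"
  by (simp add: conj_proj_def)

lemma conj_proj_in_closure:
  assumes "\<i> \<cdot>\<^sub>m K \<in> real_lie_closure G" "Y \<in> real_lie_closure G"
    and "K \<in> carrier_mat n n" "Y \<in> carrier_mat n n" "K * K = 1\<^sub>m n"
  shows "conj_proj K s Y \<in> real_lie_closure G"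
  unfolding conj_proj_def using real_lie_closure_conj_involution[OF assms] assms(2)
  by (intro real_lie_closure.add real_lie_closure.smult)

lemma conj_proj_add:
  assumes K: "K \<in> carrier_mat n n" and "Y \<in> carrier_mat n n" "Z \<in> carrier_mat n n"
  shows "conj_proj K s (Y + Z) = conj_proj K s Y + conj_proj K s Z"
proof -
  have "K * (Y + Z) * K = K * Y * K + K * Z * K"
    using assms by (simp add: mult_add_distrib_mat[of K n n] add_mult_distrib_mat[of _ n n _ K n])
  thus ?thesis
    using assms unfolding conj_proj_def by (intro eq_matI) (auto simp: algebra_simps)
qed

lemma conj_proj_smult:
  assumes "K \<in> carrier_mat n n" "Y \<in> carrier_mat n n"
  shows "conj_proj K s (c \<cdot>\<^sub>m Y) = c \<cdot>\<^sub>m conj_proj K s Y"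
proof -
  have "K * (c \<cdot>\<^sub>m Y) * K = c \<cdot>\<^sub>m (K * Y * K)"
    using assms by (simp add: mult_smult_distrib[of _ n n] mult_smult_assoc_mat[of _ n n])
  thus ?thesis
    using assms unfolding conj_proj_def by (intro eq_matI) (auto simp: algebra_simps)
qed

lemma conj_proj_msum:
  assumes K: "K \<in> carrier_mat n n" and f: "\<And>a. a \<in> S \<Longrightarrow> f a \<in> carrier_mat n n"
  shows "conj_proj K s (msum n f S) = msum n (\<lambda>a. conj_proj K s (f a)) S"
proof -
  let ?g = "\<lambda>a. complex_of_real s \<cdot>\<^sub>m (K * f a * K)"
  have KfK: "\<And>a. a \<in> S \<Longrightarrow> K * f a * K \<in> carrier_mat n n"
    and g: "\<And>a. a \<in> S \<Longrightarrow> ?g a \<in> carrier_mat n n" and fg: "\<And>a. a \<in> S \<Longrightarrow> f a + ?g a \<in> carrier_mat n n"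
    using K f by auto
  have "K * msum n f S * K = msum n (\<lambda>a. K * f a * K) S"
    using K f by (simp add: mult_msum msum_mult)
  hence "complex_of_real s \<cdot>\<^sub>m (K * msum n f S * K) = msum n ?g S"
    by (simp add: smult_msum[OF KfK])
  thus ?thesis
    unfolding conj_proj_def by (simp add: msum_add[OF f g] smult_msum[OF fg])
qed

lemma conj_proj_eigen:
  assumes "K \<in> carrier_mat n n" "t \<in> carrier_mat n n" "K * t * K = complex_of_real e \<cdot>\<^sub>m t"
    and "e \<in> {-1, 1}" "s \<in> {-1, 1}"
  shows "conj_proj K s t = (if e = s then t else 0\<^sub>m n n)"
  using assms unfolding conj_proj_def by (intro eq_matI) (auto simp flip: of_real_mult)

lemma conj_proj_zero: "K \<in> carrier_mat n n \<Longrightarrow> conj_proj K s (0\<^sub>m n n) = 0\<^sub>m n n"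
  by (simp add: conj_proj_def)

section \<open>Accessor operators in the control Lie algebra\<close>

definition accessor_pauli :: "nat \<Rightarrow> pauli list \<Rightarrow> complex mat" where
  "accessor_pauli N w = \<i> \<cdot>\<^sub>m kron (1\<^sub>m N) (sigma_word w)"

lemma accessor_pauli_mult:
  assumes "length w = length v"
  shows "accessor_pauli N w * accessor_pauli N v = (- word_phase w v) \<cdot>\<^sub>m kron (1\<^sub>m N) (sigma_word (word_mul w v))"
proof -
  let ?n = "2 ^ length w"
  have w: "kron (1\<^sub>m N) (sigma_word w) \<in> carrier_mat (N * ?n) (N * ?n)"
    and v: "kron (1\<^sub>m N) (sigma_word v) \<in> carrier_mat (N * ?n) (N * ?n)"
    using assms by auto
  have "kron (1\<^sub>m N) (sigma_word w) * kron (1\<^sub>m N) (sigma_word v) = kron (1\<^sub>m N * 1\<^sub>m N) (sigma_word w * sigma_word v)"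
    by (rule kron_mult[of _ N N _ N _ ?n ?n _ ?n]) (use assms sigma_word_carrier[of v] in auto)
  hence "kron (1\<^sub>m N) (sigma_word w) * kron (1\<^sub>m N) (sigma_word v) =
      word_phase w v \<cdot>\<^sub>m kron (1\<^sub>m N) (sigma_word (word_mul w v))"
    using assms by (simp add: sigma_word_mult kron_smult_right)
  moreover have "accessor_pauli N w * accessor_pauli N v =
      (\<i> * \<i>) \<cdot>\<^sub>m (kron (1\<^sub>m N) (sigma_word w) * kron (1\<^sub>m N) (sigma_word v))"
    unfolding accessor_pauli_def
    by (simp add: mult_smult_assoc_mat[OF w smult_carrier_mat[OF v]] mult_smult_distrib[OF w v] smult_smult_mat)
  ultimately show ?thesis
    by (simp add: smult_smult_mat)
qed

lemma accessor_pauli_commutator: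
  assumes "length w = length v" "word_sign w v = -1"
  obtains r :: real where "r \<noteq> 0"
    "accessor_pauli N w * accessor_pauli N v - accessor_pauli N v * accessor_pauli N w =
     complex_of_real r \<cdot>\<^sub>m accessor_pauli N (word_mul w v)"
proof -
  obtain r :: real where r: "r \<noteq> 0" "word_phase w v = \<i> * r"
    using word_phase_anticommuting[OF assms] .
  have "word_phase v w = - word_phase w v"
    using word_phase_commute[OF assms(1)] assms(2) by simp
  hence "accessor_pauli N w * accessor_pauli N v - accessor_pauli N v * accessor_pauli N w =
      (- 2 * word_phase w v) \<cdot>\<^sub>m kron (1\<^sub>m N) (sigma_word (word_mul w v))"
    using assms(1) by (intro eq_matI) (auto simp: accessor_pauli_mult word_mul_commute[of v w])
  also have "\<dots> = complex_of_real (-2 * r) \<cdot>\<^sub>m accessor_pauli N (word_mul w v)"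
    by (simp add: accessor_pauli_def smult_smult_mat r(2) mult_ac)
  finally show ?thesis
    using that[of "-2 * r"] r(1) by simp
qed

lemma real_lie_closure_accessor_pauli_mul:
  assumes "accessor_pauli N w \<in> real_lie_closure G" "accessor_pauli N v \<in> real_lie_closure G"
    and "length w = length v" "word_sign w v = -1"
  shows "accessor_pauli N (word_mul w v) \<in> real_lie_closure G"
proof -
  obtain r :: real where r: "r \<noteq> 0"
    "accessor_pauli N w * accessor_pauli N v - accessor_pauli N v * accessor_pauli N w =
     complex_of_real r \<cdot>\<^sub>m accessor_pauli N (word_mul w v)"
    using accessor_pauli_commutator[OF assms(3,4)] .
  have "complex_of_real r \<cdot>\<^sub>m accessor_pauli N (word_mul w v) \<in> real_lie_closure G"
    unfolding r(2)[symmetric] using assms(1,2) by (rule real_lie_closure.comm)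
  thus ?thesis
    using r(1) by (rule real_lie_closure_smult_cancel)
qed

lemma i_H_in_ctrl_lie_algebra: "\<i> \<cdot>\<^sub>m H \<in> ctrl_lie_algebra N M H"
  unfolding ctrl_lie_algebra_def by (rule real_lie_closure.gen) simp

lemma accessor_pauli_site_in_ctrl_lie_algebra:
  assumes "q < M" "a \<noteq> P0"
  shows "accessor_pauli N (site_word M q a) \<in> ctrl_lie_algebra N M H"
proof -
  have xy: "accessor_pauli N (site_word M q b) \<in> ctrl_lie_algebra N M H" if "b \<in> {PX, PY}" for b
  proof -
    have "accessor_pauli N (site_word M q b) = \<i> \<cdot>\<^sub>m kron (1\<^sub>m N) (sigma_on M (Suc q) b)"
      by (simp add: accessor_pauli_def sigma_on_site_word)
    thus ?thesis
      unfolding ctrl_lie_algebra_def using assms(1) that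
      by (intro real_lie_closure.gen) (auto intro!: exI[of _ "Suc q"])
  qed
  show ?thesis
  proof (cases "a = PZ")
    case True
    have "accessor_pauli N (word_mul (site_word M q PX) (site_word M q PY)) \<in> ctrl_lie_algebra N M H"
      unfolding ctrl_lie_algebra_def using assms(1) xy
      by (intro real_lie_closure_accessor_pauli_mul)
        (auto simp: ctrl_lie_algebra_def word_sign_site_word pauli_sign_def)
    thus ?thesis
      using assms(1) True by (simp add: word_mul_site_word) (simp add: site_word_def)
  next
    case False
    thus ?thesis using assms xy by (cases a) auto
  qed
qed

lemma kron_sigma_word_carrier:
  "A \<in> carrier_mat N N \<Longrightarrow> length w = M \<Longrightarrow> kron A (sigma_word w) \<in> carrier_mat (N * 2 ^ M) (N * 2 ^ M)"
  by (intro kron_carrier_square) auto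

definition accessor_z :: "nat \<Rightarrow> nat \<Rightarrow> nat \<Rightarrow> complex mat" where
  "accessor_z N M p = kron (1\<^sub>m N) (sigma_on M p PZ)"

lemma accessor_z_carrier [simp]: "accessor_z N M p \<in> carrier_mat (N * 2 ^ M) (N * 2 ^ M)"
  unfolding accessor_z_def by (rule kron_carrier_square) auto

lemma accessor_z_square: "accessor_z N M p * accessor_z N M p = 1\<^sub>m (N * 2 ^ M)"
proof -
  have "accessor_z N M p * accessor_z N M p = kron (1\<^sub>m N * 1\<^sub>m N) (sigma_on M p PZ * sigma_on M p PZ)"
    unfolding accessor_z_def by (rule kron_mult[of _ N N _ N _ "2 ^ M" "2 ^ M" _ "2 ^ M"]) auto
  thus ?thesis
    by (simp add: sigma_on_site_word sigma_word_square kron_one)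
qed

lemma accessor_z_in_ctrl_lie_algebra:
  "1 \<le> p \<Longrightarrow> p \<le> M \<Longrightarrow> \<i> \<cdot>\<^sub>m accessor_z N M p \<in> ctrl_lie_algebra N M H"
  using accessor_pauli_site_in_ctrl_lie_algebra[of "p - 1" M PZ N H]
  by (simp add: accessor_z_def accessor_pauli_def sigma_on_site_word)

lemma accessor_z_conj_kron_word:
  assumes A: "A \<in> carrier_mat N N" and w: "length w = M" and p: "1 \<le> p" "p \<le> M"
  shows "accessor_z N M p * kron A (sigma_word w) * accessor_z N M p =
    pauli_sign (w ! (p - 1)) PZ \<cdot>\<^sub>m kron A (sigma_word w)"
proof -
  let ?z = "sigma_on M p PZ"
  have sw: "sigma_word w \<in> carrier_mat (2 ^ M) (2 ^ M)"
    using w by auto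
  have "accessor_z N M p * kron A (sigma_word w) = kron (1\<^sub>m N * A) (?z * sigma_word w)"
    unfolding accessor_z_def by (rule kron_mult[of _ N N _ N _ "2 ^ M" "2 ^ M" _ "2 ^ M"]) (use A sw in auto)
  also have "\<dots> * accessor_z N M p = kron (1\<^sub>m N * A * 1\<^sub>m N) (?z * sigma_word w * ?z)"
    unfolding accessor_z_def
    by (rule kron_mult[of _ N N _ N _ "2 ^ M" "2 ^ M" _ "2 ^ M"]) (use A mult_carrier_mat[OF sigma_on_carrier sw] in auto)
  also have "\<dots> = kron A (pauli_sign (w ! (p - 1)) PZ \<cdot>\<^sub>m sigma_word w)"
    using A w p by (simp add: sigma_z_conj)
  finally show ?thesis
    by (simp add: kron_smult_right)
qed

section \<open>Isolating the couplings of the drift Hamiltonian\<close>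

definition coupling_filter :: "nat \<Rightarrow> nat \<Rightarrow> nat \<Rightarrow> nat \<Rightarrow> complex mat \<Rightarrow> complex mat" where
  "coupling_filter N M j k Y = conj_proj (accessor_z N M k) 1
     (conj_proj (accessor_z N M (j + 1)) (-1) (conj_proj (accessor_z N M j) (-1) Y))"

lemma coupling_filter_add:
  "Y \<in> carrier_mat (N * 2 ^ M) (N * 2 ^ M) \<Longrightarrow> Z \<in> carrier_mat (N * 2 ^ M) (N * 2 ^ M) \<Longrightarrow>
   coupling_filter N M j k (Y + Z) = coupling_filter N M j k Y + coupling_filter N M j k Z"
  unfolding coupling_filter_def by (simp add: conj_proj_add[OF accessor_z_carrier] conj_proj_carrier)

lemma coupling_filter_smult:
  "Y \<in> carrier_mat (N * 2 ^ M) (N * 2 ^ M) \<Longrightarrow>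
   coupling_filter N M j k (a \<cdot>\<^sub>m Y) = a \<cdot>\<^sub>m coupling_filter N M j k Y"
  unfolding coupling_filter_def by (simp add: conj_proj_smult[OF accessor_z_carrier] conj_proj_carrier)

lemma coupling_filter_msum:
  assumes "\<And>a. a \<in> S \<Longrightarrow> f a \<in> carrier_mat (N * 2 ^ M) (N * 2 ^ M)"
  shows "coupling_filter N M j k (msum (N * 2 ^ M) f S) = msum (N * 2 ^ M) (\<lambda>a. coupling_filter N M j k (f a)) S"
  unfolding coupling_filter_def using assms
  by (simp add: conj_proj_msum conj_proj_carrier)

lemma coupling_filter_kron_word:
  assumes A: "A \<in> carrier_mat N N" and w: "length w = M"
    and j: "1 \<le> j" "j < M" and k: "1 \<le> k" "k \<le> M"
  shows "coupling_filter N M j k (kron A (sigma_word w)) =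
    (if w ! (j - 1) \<in> {PX, PY} \<and> w ! j \<in> {PX, PY} \<and> w ! (k - 1) \<notin> {PX, PY}
     then kron A (sigma_word w) else 0\<^sub>m (N * 2 ^ M) (N * 2 ^ M))"
proof -
  let ?t = "kron A (sigma_word w)"
  have t: "?t \<in> carrier_mat (N * 2 ^ M) (N * 2 ^ M)"
    using A w by (rule kron_sigma_word_carrier)
  have eig: "accessor_z N M p * ?t * accessor_z N M p =
      complex_of_real (if w ! (p - 1) \<in> {PX, PY} then -1 else 1) \<cdot>\<^sub>m ?t" if "1 \<le> p" "p \<le> M" for p
    using accessor_z_conj_kron_word[OF A w that] by (simp add: pauli_sign_PZ)
  have proj: "conj_proj (accessor_z N M p) s ?t =
      (if (if w ! (p - 1) \<in> {PX, PY} then -1 else 1) = s then ?t else 0\<^sub>m (N * 2 ^ M) (N * 2 ^ M))"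
    if "1 \<le> p" "p \<le> M" "s \<in> {-1, 1}" for p s
    using that by (intro conj_proj_eigen[OF accessor_z_carrier t eig]) auto
  show ?thesis
    unfolding coupling_filter_def using j k
    by (simp add: proj conj_proj_zero[OF accessor_z_carrier])
qed

lemma coupling_filter_in_ctrl_lie_algebra:
  assumes "1 \<le> j" "j < M" "1 \<le> k" "k \<le> M"
    and "Y \<in> ctrl_lie_algebra N M H" "Y \<in> carrier_mat (N * 2 ^ M) (N * 2 ^ M)"
  shows "coupling_filter N M j k Y \<in> ctrl_lie_algebra N M H"
  using assms accessor_z_in_ctrl_lie_algebra[of _ M N H] unfolding coupling_filter_def ctrl_lie_algebra_def
  by (intro conj_proj_in_closure[OF _ _ accessor_z_carrier _ accessor_z_square] conj_proj_carrier accessor_z_carrier)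
    auto

lemma H_S_carrier [simp]: "H_S N E \<in> carrier_mat N N"
  by (simp add: H_S_def)

lemma ejk_carrier [simp]: "ejk N j k \<in> carrier_mat N N"
  by (simp add: ejk_def)

lemma xjk_carrier [simp]: "xjk N j k \<in> carrier_mat N N"
  by (simp add: xjk_def)

lemma s_op_carrier [simp]: "s_op N j k \<in> carrier_mat N N"
  by (simp add: s_op_def xjk_def yjk_def minus_carrier_mat[of _ N N])

lemma H0_carrier: "H0 N M E hbar \<omega> c d g \<in> carrier_mat (N * 2 ^ M) (N * 2 ^ M)"
  by (auto simp: H0_def H_S'_def H_SA_def H_A_def intro!: kron_carrier_square)

lemma kron_one_H_A_pauli_expansion:
  "kron (1\<^sub>m N) (H_A M hbar \<omega> c) =
     msum (N * 2 ^ M) (\<lambda>i. complex_of_real (hbar * \<omega> i) \<cdot>\<^sub>m kron (1\<^sub>m N) (sigma_word (site_word M (i - 1) PZ))) {1..M}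
   + msum (N * 2 ^ M) (\<lambda>i. complex_of_real (c i) \<cdot>\<^sub>m kron (1\<^sub>m N) (sigma_word (pair_word M (i - 1) PX PX))) {1..M - 1}"
proof -
  let ?Z = "\<lambda>i. complex_of_real (hbar * \<omega> i) \<cdot>\<^sub>m sigma_on M i PZ"
  let ?X = "\<lambda>i. complex_of_real (c i) \<cdot>\<^sub>m sigma_word (pair_word M (i - 1) PX PX)"
  have XX: "msum (2 ^ M) (\<lambda>i. complex_of_real (c i) \<cdot>\<^sub>m (sigma_on M i PX * sigma_on M (i + 1) PX)) {1..M - 1} =
      msum (2 ^ M) ?X {1..M - 1}"
    by (rule msum_cong) (use sigma_on_mult_adjacent in auto)
  have Z: "kron (1\<^sub>m N) (msum (2 ^ M) ?Z {1..M}) = msum (N * 2 ^ M) (\<lambda>i. kron (1\<^sub>m N) (?Z i)) {1..M}"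
    by (rule kron_msum) auto
  have X: "kron (1\<^sub>m N) (msum (2 ^ M) ?X {1..M - 1}) = msum (N * 2 ^ M) (\<lambda>i. kron (1\<^sub>m N) (?X i)) {1..M - 1}"
    by (rule kron_msum) auto
  show ?thesis
    unfolding H_A_def XX kron_add_right[OF msum_carrier msum_carrier] Z X
    by (simp add: kron_smult_right sigma_on_site_word)
qed

context
  fixes N M j k :: nat
  assumes j: "1 \<le> j" "j < M" and k: "1 \<le> k" "k \<le> M" "k \<noteq> j" "k \<noteq> j + 1"
begin

lemma coupling_filter_H_S:
  "coupling_filter N M j k (kron (H_S N E) (1\<^sub>m (2 ^ M))) = 0\<^sub>m (N * 2 ^ M) (N * 2 ^ M)"
  using coupling_filter_kron_word[of "H_S N E" N "replicate M P0" M j k] j k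
  by (simp add: sigma_word_identity)

lemma coupling_filter_H_S':
  "coupling_filter N M j k (H_S' N M d) = 0\<^sub>m (N * 2 ^ M) (N * 2 ^ M)"
proof -
  have "coupling_filter N M j k (complex_of_real (d i) \<cdot>\<^sub>m kron (xjk N i (i + 1)) (1\<^sub>m (2 ^ M))) =
      0\<^sub>m (N * 2 ^ M) (N * 2 ^ M)" for i
    using coupling_filter_kron_word[of "xjk N i (i + 1)" N "replicate M P0" M j k] j k
    by (simp add: coupling_filter_smult sigma_word_identity kron_carrier_square)
  thus ?thesis
    unfolding H_S'_def by (simp add: coupling_filter_msum kron_carrier_square msum_zero)
qed

lemma coupling_filter_H_SA:
  "coupling_filter N M j k (H_SA N M g) = 0\<^sub>m (N * 2 ^ M) (N * 2 ^ M)"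
proof -
  let ?S = "{1..N - 1} \<times> {1, 2 :: nat} \<times> xy_words M"
  let ?f = "\<lambda>(i, l, w). complex_of_real (g i l w) \<cdot>\<^sub>m kron (s_op N i l) (sigma_word w)"
  have f: "?f x \<in> carrier_mat (N * 2 ^ M) (N * 2 ^ M)" if "x \<in> ?S" for x
    using that by (auto simp: xy_words_def kron_sigma_word_carrier)
  have "coupling_filter N M j k (?f x) = 0\<^sub>m (N * 2 ^ M) (N * 2 ^ M)" if "x \<in> ?S" for x
  proof -
    obtain i l w where x: "x = (i, l, w)" and w: "length w = M" "set w \<subseteq> {PX, PY}"
      using \<open>x \<in> ?S\<close> by (auto simp: xy_words_def)
    have "k - 1 < length w"
      using k w by simp
    hence "w ! (k - 1) \<in> {PX, PY}"
      using w(2) nth_mem by blast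
    thus ?thesis
      using coupling_filter_kron_word[of "s_op N i l" N w M j k] j k w
      by (simp add: x coupling_filter_smult kron_sigma_word_carrier)
  qed
  hence "msum (N * 2 ^ M) (\<lambda>x. coupling_filter N M j k (?f x)) ?S =
      msum (N * 2 ^ M) (\<lambda>x. 0\<^sub>m (N * 2 ^ M) (N * 2 ^ M)) ?S"
    by (rule msum_cong)
  moreover have "coupling_filter N M j k (H_SA N M g) = msum (N * 2 ^ M) (\<lambda>x. coupling_filter N M j k (?f x)) ?S"
    unfolding H_SA_def by (rule coupling_filter_msum) (rule f)
  ultimately show ?thesis
    by (simp add: msum_zero)
qed

lemma coupling_filter_adjacent_xx:
  assumes i: "1 \<le> i" "i < M"
  shows "coupling_filter N M j k (kron (1\<^sub>m N) (sigma_word (pair_word M (i - 1) PX PX))) =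
    (if i = j then kron (1\<^sub>m N) (sigma_word (pair_word M (i - 1) PX PX)) else 0\<^sub>m (N * 2 ^ M) (N * 2 ^ M))"
proof -
  let ?w = "pair_word M (i - 1) PX PX"
  have "?w ! q = (if q = i - 1 \<or> q = i then PX else P0)" if "q < M" for q
    using i that by (auto simp: nth_pair_word)
  hence "?w ! (j - 1) \<in> {PX, PY} \<and> ?w ! j \<in> {PX, PY} \<and> ?w ! (k - 1) \<notin> {PX, PY} \<longleftrightarrow>
      j - 1 \<in> {i - 1, i} \<and> j \<in> {i - 1, i} \<and> k - 1 \<notin> {i - 1, i}"
    using j k by simp
  also have "\<dots> \<longleftrightarrow> i = j"
    using i j k by auto
  finally have "?w ! (j - 1) \<in> {PX, PY} \<and> ?w ! j \<in> {PX, PY} \<and> ?w ! (k - 1) \<notin> {PX, PY} \<longleftrightarrow> i = j" .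
  thus ?thesis
    using coupling_filter_kron_word[of "1\<^sub>m N" N ?w M j k] j k by simp
qed

lemma coupling_filter_H_A:
  "coupling_filter N M j k (kron (1\<^sub>m N) (H_A M hbar \<omega> c)) =
   complex_of_real (c j) \<cdot>\<^sub>m kron (1\<^sub>m N) (sigma_word (pair_word M (j - 1) PX PX))"
proof -
  let ?D = "N * 2 ^ M"
  let ?Z = "\<lambda>i. complex_of_real (hbar * \<omega> i) \<cdot>\<^sub>m kron (1\<^sub>m N) (sigma_word (site_word M (i - 1) PZ))"
  let ?X = "\<lambda>i. complex_of_real (c i) \<cdot>\<^sub>m kron (1\<^sub>m N) (sigma_word (pair_word M (i - 1) PX PX))"
  have Zc: "?Z i \<in> carrier_mat ?D ?D" and Xc: "?X i \<in> carrier_mat ?D ?D" for i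
    by (simp_all add: kron_sigma_word_carrier)
  have "coupling_filter N M j k (?Z i) = 0\<^sub>m ?D ?D" if "i \<in> {1..M}" for i
    using coupling_filter_kron_word[of "1\<^sub>m N" N "site_word M (i - 1) PZ" M j k] that j k
    by (simp add: coupling_filter_smult kron_sigma_word_carrier nth_site_word)
  hence Z: "msum ?D (\<lambda>i. coupling_filter N M j k (?Z i)) {1..M} = msum ?D (\<lambda>i. 0\<^sub>m ?D ?D) {1..M}"
    by (rule msum_cong)
  have "coupling_filter N M j k (?X i) = (if i = j then ?X i else 0\<^sub>m ?D ?D)" if "i \<in> {1..M - 1}" for i
  proof -
    have i: "1 \<le> i" "i < M"
      using that by auto
    show ?thesis
      using coupling_filter_adjacent_xx[OF i] by (simp add: coupling_filter_smult kron_sigma_word_carrier)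
  qed
  hence X: "msum ?D (\<lambda>i. coupling_filter N M j k (?X i)) {1..M - 1} =
      msum ?D (\<lambda>i. if i = j then ?X i else 0\<^sub>m ?D ?D) {1..M - 1}"
    by (rule msum_cong)
  show ?thesis
    unfolding kron_one_H_A_pauli_expansion coupling_filter_add[OF msum_carrier msum_carrier]
      coupling_filter_msum[OF Zc] coupling_filter_msum[OF Xc] Z X
    using j Xc[of j] by (simp add: msum_zero msum_delta)
qed

lemma coupling_filter_i_H0:
  "coupling_filter N M j k (\<i> \<cdot>\<^sub>m H0 N M E hbar \<omega> c d g) =
   complex_of_real (c j) \<cdot>\<^sub>m accessor_pauli N (pair_word M (j - 1) PX PX)"
proof -
  let ?D = "N * 2 ^ M"
  have carriers: "kron (H_S N E) (1\<^sub>m (2 ^ M)) \<in> carrier_mat ?D ?D" "H_S' N M d \<in> carrier_mat ?D ?D"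
    "kron (1\<^sub>m N) (H_A M hbar \<omega> c) \<in> carrier_mat ?D ?D" "H_SA N M g \<in> carrier_mat ?D ?D"
    by (auto simp: H_S'_def H_SA_def H_A_def intro!: kron_carrier_square)
  thus ?thesis
    unfolding H0_def
    by (simp add: coupling_filter_smult coupling_filter_add coupling_filter_H_S coupling_filter_H_S'
        coupling_filter_H_A coupling_filter_H_SA accessor_pauli_def kron_sigma_word_carrier smult_smult_mat mult.commute)
qed

end

lemma adjacent_xx_in_ctrl_lie_algebra:
  assumes "2 < M" "1 \<le> j" "j < M" "c j \<noteq> 0"
  shows "accessor_pauli N (pair_word M (j - 1) PX PX) \<in> ctrl_lie_algebra N M (H0 N M E hbar \<omega> c d g)"
proof -
  define k where "k = (if j + 2 \<le> M then j + 2 else j - 1)"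
  have k: "1 \<le> k" "k \<le> M" "k \<noteq> j" "k \<noteq> j + 1"
    using assms by (auto simp: k_def)
  have "coupling_filter N M j k (\<i> \<cdot>\<^sub>m H0 N M E hbar \<omega> c d g) \<in> ctrl_lie_algebra N M (H0 N M E hbar \<omega> c d g)"
    using assms k H0_carrier
    by (intro coupling_filter_in_ctrl_lie_algebra i_H_in_ctrl_lie_algebra) auto
  hence "complex_of_real (c j) \<cdot>\<^sub>m accessor_pauli N (pair_word M (j - 1) PX PX) \<in> ctrl_lie_algebra N M (H0 N M E hbar \<omega> c d g)"
    using assms k by (simp add: coupling_filter_i_H0)
  thus ?thesis
    unfolding ctrl_lie_algebra_def using assms(4) by (rule real_lie_closure_smult_cancel)
qed

theorem lemma4:
  fixes N M :: nat and E \<omega> c d :: "nat \<Rightarrow> real" and hbar :: real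
    and g :: "nat \<Rightarrow> nat \<Rightarrow> pauli list \<Rightarrow> real"
  assumes "N \<ge> 2" and "M > 2"
    and "hbar > 0"
    and "(\<Sum>j=1..N. E j) = 0"
    and "condition1 M c"
    and "condition2 N M g"
  shows "\<forall>w \<in> all_words M. w \<noteq> replicate M P0 \<longrightarrow>
           \<i> \<cdot>\<^sub>m kron (1\<^sub>m N) (sigma_word w) \<in> ctrl_lie_algebra N M (H0 N M E hbar \<omega> c d g)"
proof -
  let ?L = "ctrl_lie_algebra N M (H0 N M E hbar \<omega> c d g)"
  interpret pauli_word_generation M "\<lambda>w. accessor_pauli N w \<in> ?L"
  proof
    show "accessor_pauli N (site_word M p a) \<in> ?L" if "p < M" "a \<noteq> P0" for p a
      using that by (rule accessor_pauli_site_in_ctrl_lie_algebra)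
    show "accessor_pauli N (pair_word M p PX PX) \<in> ?L" if "Suc p < M" for p
      using adjacent_xx_in_ctrl_lie_algebra[of M "Suc p" c N E hbar \<omega> d g] assms(2,5) that
      by (auto simp: condition1_def)
    show "accessor_pauli N (word_mul w v) \<in> ?L"
      if "accessor_pauli N w \<in> ?L" "accessor_pauli N v \<in> ?L" "length w = M" "length v = M" "word_sign w v = -1"
      for w v
      using that unfolding ctrl_lie_algebra_def by (intro real_lie_closure_accessor_pauli_mul) auto
  qed
  show ?thesis
    using nonidentity by (auto simp: all_words_def accessor_pauli_def)
qed

end
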